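(* For every directed space $X$, there is the equality $\vec{\mathrm{Sp}}(\vec{\Omega}(X))=X$. Consequently the category of directed spaces is isomorphic to a full reflective subcategory of the category of multipointed $d$-spaces.
   Context: Let $\mathbf{Top}$ be the category of $\Delta$-generated spaces (or of $\Delta$-Hausdorff $\Delta$-generated spaces). For $\ell>0$ let $\mu_\ell(t)=t/\ell$, $\mu_\ell:[0,\ell]\to[0,1]$. $\mathcal{M}(\ell,\ell')$ is the set of non-decreasing surjective continuous maps $[0,\ell]\to[0,\ell']$; $\mathcal{I}(\ell)$ is the set of non-decreasing continuous maps $[0,1]\to[0,\ell]$ (constant maps allowed). The Moore composition of $\gamma_1:[0,\ell_1]\to U$, $\gamma_2:[0,\ell_2]\to U$ with $\gamma_1(\ell_1)=\gamma_2(0)$ is $\gamma_1*\gamma_2:[0,\ell_1+\ell_2]\to U$, equal to $\gamma_1(t)$ on $[0,\ell_1]$ and $\gamma_2(t-\ell_1)$ on $[\ell_1,\ell_1+\ell_2]$; the normalized composition of $\gamma_1,\gamma_2:[0,1]\to U$ is $(\gamma_1\mu_{1/2})*(\gamma_2\mu_{1/2})$. A multipointed $d$-space is a triple $X=(|X|,X^0,\mathbb{P}^{\mathrm{top}}X)$: a space, a subset of states, and a set of continuous maps $[0,1]\to|X|$ (execution paths) with endpoints in $X^0$, closed under precomposition by $\mathcal{M}(1,1)$ and under normalized composition; maps are continuous maps preserving states and execution paths. A directed space is a pair $Y=(|Y|,d(Y))$ with $d(Y)$ a set of continuous maps $[0,1]\to|Y|$ containing all constant paths, closed under normalized composition and under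 precomposition by $\mathcal{I}(1)$; morphisms are continuous maps preserving directed paths. $\vec{\mathrm{Sp}}$ sends a multipointed $d$-space $X$ to the directed space $(|X|,d(X))$ where $d(X)$ consists of all constant paths and all Moore compositions $(\gamma_1\phi_1\mu_{\ell_1})*\dots*(\gamma_n\phi_n\mu_{\ell_n})$ with $n\ge1$, $\ell_i>0$, $\sum\ell_i=1$, $\gamma_i$ execution paths and $\phi_i\in\mathcal{I}(1)$. $\vec{\Omega}$ sends a directed space $(|Y|,d(Y))$ to the multipointed $d$-space $(|Y|,|Y|,d(Y))$. $\vec{\mathrm{Sp}}$ is left adjoint to $\vec{\Omega}$, both acting as identity on underlying maps. *)

theory Defs
  imports "HOL-Analysis.Analysis" "HOL-Homology.Simplices"
begin

definition delta_generated :: "'a topology \<Rightarrow> bool" where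
  "delta_generated X \<longleftrightarrow>
     (\<forall>U. U \<subseteq> topspace X \<longrightarrow>
        (openin X U \<longleftrightarrow>
          (\<forall>p \<sigma>. continuous_map (subtopology (powertop_real UNIV) (standard_simplex p)) X \<sigma> \<longrightarrow>
             openin (subtopology (powertop_real UNIV) (standard_simplex p))
                    {x \<in> standard_simplex p. \<sigma> x \<in> U})))"

text \<open>Paths are functions functions real => a; only their values on [0,1] matter.\<close>

definition path_on :: "'a topology \<Rightarrow> (real \<Rightarrow> 'a) \<Rightarrow> bool" where
  "path_on X \<gamma> \<longleftrightarrow> continuous_map (top_of_set {0..1}) X \<gamma>"

definition reparam_I :: "(real \<Rightarrow> real) \<Rightarrow> bool" where
  "reparam_I \<phi> \<longleftrightarrow> continuous_on {0..1} \<phi> \<and> \<phi> ` {0..1} \<subseteq> {0..1} \<and> mono_on {0..1} \<phi>"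

definition reparam_M :: "(real \<Rightarrow> real) \<Rightarrow> bool" where
  "reparam_M \<phi> \<longleftrightarrow> continuous_on {0..1} \<phi> \<and> \<phi> ` {0..1} = {0..1} \<and> mono_on {0..1} \<phi>"

definition norm_comp :: "(real \<Rightarrow> 'a) \<Rightarrow> (real \<Rightarrow> 'a) \<Rightarrow> (real \<Rightarrow> 'a)" where
  "norm_comp \<gamma>1 \<gamma>2 = (\<lambda>t. if t \<le> 1/2 then \<gamma>1 (2 * t) else \<gamma>2 (2 * t - 1))"

definition ext01 :: "(real \<Rightarrow> 'a) set \<Rightarrow> bool" where
  "ext01 P \<longleftrightarrow> (\<forall>\<gamma> \<delta>. \<gamma> \<in> P \<longrightarrow> (\<forall>t\<in>{0..1}. \<delta> t = \<gamma> t) \<longrightarrow> \<delta> \<in> P)"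

record 'a dspace =
  dtop :: "'a topology"
  dpaths :: "(real \<Rightarrow> 'a) set"

record 'a mdspace =
  mtop :: "'a topology"
  mstates :: "'a set"
  mpaths :: "(real \<Rightarrow> 'a) set"

definition is_dspace :: "'a dspace \<Rightarrow> bool" where
  "is_dspace Y \<longleftrightarrow>
     delta_generated (dtop Y) \<and>
     ext01 (dpaths Y) \<and>
     (\<forall>\<gamma>\<in>dpaths Y. path_on (dtop Y) \<gamma>) \<and>
     (\<forall>x\<in>topspace (dtop Y). (\<lambda>t. x) \<in> dpaths Y) \<and>
     (\<forall>\<gamma>1\<in>dpaths Y. \<forall>\<gamma>2\<in>dpaths Y. \<gamma>1 1 = \<gamma>2 0 \<longrightarrow> norm_comp \<gamma>1 \<gamma>2 \<in> dpaths Y) \<and>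
     (\<forall>\<gamma>\<in>dpaths Y. \<forall>\<phi>. reparam_I \<phi> \<longrightarrow> \<gamma> \<circ> \<phi> \<in> dpaths Y)"

definition is_mdspace :: "'a mdspace \<Rightarrow> bool" where
  "is_mdspace X \<longleftrightarrow>
     delta_generated (mtop X) \<and>
     mstates X \<subseteq> topspace (mtop X) \<and>
     ext01 (mpaths X) \<and>
     (\<forall>\<gamma>\<in>mpaths X. path_on (mtop X) \<gamma> \<and> \<gamma> 0 \<in> mstates X \<and> \<gamma> 1 \<in> mstates X) \<and>
     (\<forall>\<gamma>1\<in>mpaths X. \<forall>\<gamma>2\<in>mpaths X. \<gamma>1 1 = \<gamma>2 0 \<longrightarrow> norm_comp \<gamma>1 \<gamma>2 \<in> mpaths X) \<and>
     (\<forall>\<gamma>\<in>mpaths X. \<forall>\<phi>. reparam_M \<phi> \<longrightarrow> \<gamma> \<circ> \<phi> \<in> mpaths X)"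

definition dspace_map :: "'a dspace \<Rightarrow> 'b dspace \<Rightarrow> ('a \<Rightarrow> 'b) \<Rightarrow> bool" where
  "dspace_map Y Y' f \<longleftrightarrow> continuous_map (dtop Y) (dtop Y') f \<and>
     (\<forall>\<gamma>\<in>dpaths Y. f \<circ> \<gamma> \<in> dpaths Y')"

definition mdspace_map :: "'a mdspace \<Rightarrow> 'b mdspace \<Rightarrow> ('a \<Rightarrow> 'b) \<Rightarrow> bool" where
  "mdspace_map X X' f \<longleftrightarrow> continuous_map (mtop X) (mtop X') f \<and>
     f ` mstates X \<subseteq> mstates X' \<and>
     (\<forall>\<gamma>\<in>mpaths X. f \<circ> \<gamma> \<in> mpaths X')"

definition is_moore_comp :: "(real \<Rightarrow> 'a) set \<Rightarrow> (real \<Rightarrow> 'a) \<Rightarrow> bool" where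
  "is_moore_comp P \<delta> \<longleftrightarrow>
     (\<exists>(n::nat) (l::nat \<Rightarrow> real) (\<gamma>::nat \<Rightarrow> real \<Rightarrow> 'a) (\<phi>::nat \<Rightarrow> real \<Rightarrow> real).
        n \<ge> 1 \<and>
        (\<forall>i<n. l i > 0) \<and> (\<Sum>i<n. l i) = 1 \<and>
        (\<forall>i<n. \<gamma> i \<in> P \<and> reparam_I (\<phi> i)) \<and>
        (\<forall>i. Suc i < n \<longrightarrow> \<gamma> i (\<phi> i 1) = \<gamma> (Suc i) (\<phi> (Suc i) 0)) \<and>
        (\<forall>i<n. \<forall>t. (\<Sum>j<i. l j) \<le> t \<and> t \<le> (\<Sum>j<i. l j) + l i \<longrightarrow>
              \<delta> t = \<gamma> i (\<phi> i ((t - (\<Sum>j<i. l j)) / l i))))"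

definition Sp :: "'a mdspace \<Rightarrow> 'a dspace" where
  "Sp X = \<lparr> dtop = mtop X,
            dpaths = {\<delta>. (\<exists>x\<in>topspace (mtop X). \<forall>t\<in>{0..1}. \<delta> t = x)
                         \<or> is_moore_comp (mpaths X) \<delta>} \<rparr>"

definition Omega :: "'a dspace \<Rightarrow> 'a mdspace" where
  "Omega Y = \<lparr> mtop = dtop Y, mstates = topspace (dtop Y), mpaths = dpaths Y \<rparr>"

end

theory Submission
  imports Defs
begin

text \<open>A Moore composition of directed paths with lengths \<open>l\<^sub>0, \<dots>, l\<^sub>n\<close> is, after
  reparametrisation, the normalized composition of the composition of the first \<open>n\<close> pieces
  (rescaled to \<open>[0,1]\<close>) with the last piece.  The reparametrisation is the piecewise linear
  non-decreasing map \<open>[0,1] \<rightarrow> [0,1]\<close> sending \<open>l\<^sub>0 + \<dots> + l\<^sub>n\<^sub>-\<^sub>1\<close> to \<open>1/2\<close>, which lies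
  in \<open>\<I>(1)\<close>; so by induction every execution path of \<open>Sp(\<Omega>(Y))\<close> is already a directed
  path of \<open>Y\<close>.  Conversely each directed path is a Moore composition with a single piece.
  Since \<open>\<Omega>\<close> changes neither the maps nor the paths, it is fully faithful, and its left adjoint \<open>Sp\<close>
  makes its image reflective.\<close>

lemma dpaths_cong:
  assumes "is_dspace Y" "\<gamma> \<in> dpaths Y" "\<forall>t\<in>{0..1}. \<delta> t = \<gamma> t"
  shows "\<delta> \<in> dpaths Y"
  using assms unfolding is_dspace_def ext01_def by blast

lemma dpaths_reparam_I:
  assumes "is_dspace Y" "\<gamma> \<in> dpaths Y" "reparam_I \<phi>"
  shows "\<gamma> \<circ> \<phi> \<in> dpaths Y"
  using assms unfolding is_dspace_def by blast

lemma reparam_I_id: "reparam_I (\<lambda>t. t)"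
  unfolding reparam_I_def by (auto intro: mono_onI)

lemma reparam_I_piecewise_linear:
  fixes a :: real
  assumes a: "0 < a" "a < 1"
  shows "reparam_I (\<lambda>t. if t \<le> a then t / (2*a) else 1/2 + (t - a) / (2*(1-a)))"
    (is "reparam_I ?\<psi>")
proof -
  have "continuous_on {0..1} ?\<psi>"
    by (rule continuous_on_cases_le) (use a in \<open>auto intro!: continuous_intros\<close>)
  moreover have "mono_on {0..1} ?\<psi>"
  proof (rule mono_onI)
    fix r s :: real
    assume "r \<in> {0..1}" "r \<le> s"
    have "r / (2*a) \<le> s / (2*a)" "(r - a) / (2*(1-a)) \<le> (s - a) / (2*(1-a))"
      using a \<open>r \<le> s\<close> by (simp_all add: divide_right_mono)
    moreover have "r \<le> a \<Longrightarrow> r / (2*a) \<le> 1/2" "a < s \<Longrightarrow> 0 \<le> (s - a) / (2*(1-a))"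
      using a \<open>r \<in> {0..1}\<close> by (simp_all add: divide_simps)
    ultimately show "?\<psi> r \<le> ?\<psi> s"
      using \<open>r \<le> s\<close> by (auto simp del: times_divide_eq_right divide_le_eq_1)
  qed
  moreover have "?\<psi> ` {0..1} \<subseteq> {0..1}"
    using a by (auto simp: divide_simps)
  ultimately show ?thesis
    unfolding reparam_I_def by blast
qed

lemma dpaths_concat_at:
  fixes a :: real
  assumes Y: "is_dspace Y" and \<alpha>: "\<alpha> \<in> dpaths Y" and \<beta>: "\<beta> \<in> dpaths Y"
    and "\<alpha> 1 = \<beta> 0" and a: "0 < a" "a < 1"
    and \<delta>_left: "\<And>t. 0 \<le> t \<Longrightarrow> t \<le> a \<Longrightarrow> \<delta> t = \<alpha> (t / a)"
    and \<delta>_right: "\<And>t. a \<le> t \<Longrightarrow> t \<le> 1 \<Longrightarrow> \<delta> t = \<beta> ((t - a) / (1 - a))"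
  shows "\<delta> \<in> dpaths Y"
proof -
  define \<psi> where "\<psi> = (\<lambda>t::real. if t \<le> a then t / (2*a) else 1/2 + (t - a) / (2*(1-a)))"
  have "norm_comp \<alpha> \<beta> \<in> dpaths Y"
    using Y \<alpha> \<beta> \<open>\<alpha> 1 = \<beta> 0\<close> unfolding is_dspace_def by blast
  then have comp: "norm_comp \<alpha> \<beta> \<circ> \<psi> \<in> dpaths Y"
    using dpaths_reparam_I[OF Y] reparam_I_piecewise_linear[OF a] unfolding \<psi>_def by blast
  have "\<delta> t = (norm_comp \<alpha> \<beta> \<circ> \<psi>) t" if t: "t \<in> {0..1}" for t
  proof (cases "t \<le> a")
    case True
    then have "\<psi> t \<le> 1/2" "2 * \<psi> t = t / a"
      using a t unfolding \<psi>_def by (auto simp: divide_simps)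
    then show ?thesis
      using \<delta>_left[of t] True t unfolding norm_comp_def by auto
  next
    case False
    then have "\<not> \<psi> t \<le> 1/2" "2 * \<psi> t - 1 = (t - a) / (1 - a)"
      using a t unfolding \<psi>_def by (auto simp: field_simps)
    then show ?thesis
      using \<delta>_right[of t] False t unfolding norm_comp_def by auto
  qed
  then show ?thesis
    using dpaths_cong[OF Y comp] by blast
qed

text \<open>Matching endpoints need not be required: adjacent pieces both equal \<open>\<delta>\<close> where they meet.\<close>

definition moore_pieces :: "nat \<Rightarrow> (nat \<Rightarrow> real) \<Rightarrow> (nat \<Rightarrow> real \<Rightarrow> 'a) \<Rightarrow> (real \<Rightarrow> 'a) \<Rightarrow> bool"
  where "moore_pieces n l \<rho> \<delta> \<longleftrightarrow>
    (\<forall>i<n. \<forall>t. (\<Sum>j<i. l j) \<le> t \<and> t \<le> (\<Sum>j<i. l j) + l i \<longrightarrow>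
       \<delta> t = \<rho> i ((t - (\<Sum>j<i. l j)) / l i))"

lemma moore_pieces_Suc:
  "moore_pieces (Suc n) l \<rho> \<delta> \<longleftrightarrow>
     moore_pieces n l \<rho> \<delta> \<and>
     (\<forall>t. (\<Sum>j<n. l j) \<le> t \<and> t \<le> (\<Sum>j<n. l j) + l n \<longrightarrow> \<delta> t = \<rho> n ((t - (\<Sum>j<n. l j)) / l n))"
  unfolding moore_pieces_def by (auto simp: less_Suc_eq)

lemma moore_pieces_rescale:
  fixes L :: real
  assumes "L > 0" and "\<forall>i<n. l i > 0" and \<delta>: "moore_pieces n l \<rho> \<delta>"
  shows "moore_pieces n (\<lambda>i. l i / L) \<rho> (\<lambda>s. \<delta> (L * s))"
  unfolding moore_pieces_def
proof (intro allI impI)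
  fix i t
  assume i: "i < n" and t: "(\<Sum>j<i. l j / L) \<le> t \<and> t \<le> (\<Sum>j<i. l j / L) + l i / L"
  have sum_scaled: "(\<Sum>j<i. l j / L) = (\<Sum>j<i. l j) / L"
    by (simp add: sum_divide_distrib)
  have "(\<Sum>j<i. l j) \<le> L * t \<and> L * t \<le> (\<Sum>j<i. l j) + l i"
    using t \<open>L > 0\<close> unfolding sum_scaled
    by (simp add: add_divide_distrib[symmetric] pos_divide_le_eq pos_le_divide_eq mult.commute)
  then have "\<delta> (L * t) = \<rho> i ((L * t - (\<Sum>j<i. l j)) / l i)"
    using \<delta> i unfolding moore_pieces_def by blast
  also have "(L * t - (\<Sum>j<i. l j)) / l i = (t - (\<Sum>j<i. l j / L)) / (l i / L)"
    using \<open>L > 0\<close> assms(2) i unfolding sum_scaled by (simp add: divide_simps)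
  finally show "\<delta> (L * t) = \<rho> i ((t - (\<Sum>j<i. l j / L)) / (l i / L))" .
qed

lemma moore_pieces_in_dpaths:
  assumes Y: "is_dspace Y"
  shows "n \<ge> 1 \<Longrightarrow> \<forall>i<n. l i > 0 \<Longrightarrow> (\<Sum>i<n. l i) = 1 \<Longrightarrow> \<forall>i<n. \<rho> i \<in> dpaths Y \<Longrightarrow>
    moore_pieces n l \<rho> \<delta> \<Longrightarrow> \<delta> \<in> dpaths Y"
proof (induction n arbitrary: l \<delta>)
  case 0
  then show ?case by simp
next
  case (Suc n)
  define L where "L = (\<Sum>i<n. l i)"
  have last_piece: "\<delta> t = \<rho> n ((t - L) / l n)" if "L \<le> t" "t \<le> L + l n" for t
    using Suc.prems(5) that unfolding moore_pieces_Suc L_def by blast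
  show ?case
  proof (cases "n = 0")
    case True
    then show ?thesis
      using Suc.prems(3,4) last_piece dpaths_cong[OF Y] unfolding L_def by simp
  next
    case False
    have "L > 0"
      unfolding L_def using False Suc.prems(2) by (intro sum_pos) auto
    have l_last: "l n = 1 - L"
      using Suc.prems(3) unfolding L_def by simp
    moreover have "l n > 0"
      using Suc.prems(2) by simp
    ultimately have "L < 1"
      by linarith
    have prefix: "(\<lambda>s. \<delta> (L * s)) \<in> dpaths Y"
    proof (rule Suc.IH)
      show "(\<Sum>i<n. l i / L) = 1"
        using \<open>L > 0\<close> unfolding L_def by (simp add: sum_divide_distrib[symmetric])
      show "moore_pieces n (\<lambda>i. l i / L) \<rho> (\<lambda>s. \<delta> (L * s))"
        using Suc.prems(2,5) unfolding moore_pieces_Suc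
        by (intro moore_pieces_rescale[OF \<open>L > 0\<close>]) auto
    qed (use False Suc.prems(2,4) \<open>L > 0\<close> in auto)
    show ?thesis
    proof (rule dpaths_concat_at[OF Y prefix _ _ \<open>L > 0\<close> \<open>L < 1\<close>])
      show "\<rho> n \<in> dpaths Y"
        using Suc.prems(4) by simp
      show "\<delta> (L * 1) = \<rho> n 0"
        using last_piece[of L] \<open>l n > 0\<close> by simp
      show "\<delta> t = \<rho> n ((t - L) / (1 - L))" if "L \<le> t" "t \<le> 1" for t
        using last_piece[of t] that by (simp add: l_last)
    qed (use \<open>L > 0\<close> in simp)
  qed
qed

lemma moore_comp_in_dpaths:
  assumes Y: "is_dspace Y" and "is_moore_comp (dpaths Y) \<delta>"
  shows "\<delta> \<in> dpaths Y"
proof -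
  obtain n l \<gamma> \<phi> where n: "(n::nat) \<ge> 1" and l: "\<forall>i<n. l i > (0::real)" "(\<Sum>i<n. l i) = 1"
    and pieces: "\<forall>i<n. \<gamma> i \<in> dpaths Y \<and> reparam_I (\<phi> i)"
    and \<delta>: "\<forall>i<n. \<forall>t. (\<Sum>j<i. l j) \<le> t \<and> t \<le> (\<Sum>j<i. l j) + l i \<longrightarrow>
           \<delta> t = \<gamma> i (\<phi> i ((t - (\<Sum>j<i. l j)) / l i))"
    using assms(2) unfolding is_moore_comp_def by (elim exE conjE) blast
  have "\<forall>i<n. \<gamma> i \<circ> \<phi> i \<in> dpaths Y"
    using pieces dpaths_reparam_I[OF Y] by blast
  moreover have "moore_pieces n l (\<lambda>i. \<gamma> i \<circ> \<phi> i) \<delta>"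
    using \<delta> unfolding moore_pieces_def by simp
  ultimately show ?thesis
    by (rule moore_pieces_in_dpaths[OF Y n l])
qed

lemma is_moore_comp_single:
  assumes "\<gamma> \<in> P"
  shows "is_moore_comp P \<gamma>"
  unfolding is_moore_comp_def
  using assms reparam_I_id
  by (intro exI[of _ 1] exI[of _ "\<lambda>_. 1"] exI[of _ "\<lambda>_. \<gamma>"] exI[of _ "\<lambda>_ t. t"]) auto

lemma Sp_Omega:
  assumes Y: "is_dspace Y"
  shows "Sp (Omega Y) = Y"
proof (rule dspace.equality)
  show "dpaths (Sp (Omega Y)) = dpaths Y"
  proof (intro equalityI subsetI)
    fix \<delta>
    assume "\<delta> \<in> dpaths (Sp (Omega Y))"
    then have "(\<exists>x\<in>topspace (dtop Y). \<forall>t\<in>{0..1}. \<delta> t = x) \<or> is_moore_comp (dpaths Y) \<delta>"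
      unfolding Sp_def Omega_def by simp
    then show "\<delta> \<in> dpaths Y"
    proof
      assume "\<exists>x\<in>topspace (dtop Y). \<forall>t\<in>{0..1}. \<delta> t = x"
      then obtain x where "x \<in> topspace (dtop Y)" "\<forall>t\<in>{0..1}. \<delta> t = x"
        by blast
      moreover from this(1) have "(\<lambda>t. x) \<in> dpaths Y"
        using Y unfolding is_dspace_def by blast
      ultimately show ?thesis
        using dpaths_cong[OF Y] by blast
    next
      assume "is_moore_comp (dpaths Y) \<delta>"
      then show ?thesis
        by (rule moore_comp_in_dpaths[OF Y])
    qed
  next
    fix \<delta>
    assume "\<delta> \<in> dpaths Y"
    then show "\<delta> \<in> dpaths (Sp (Omega Y))"
      unfolding Sp_def Omega_def by (simp add: is_moore_comp_single)
  qed
qed (simp_all add: Sp_def Omega_def)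

lemma mdspace_map_Omega_iff:
  "mdspace_map (Omega Y) (Omega Y') f \<longleftrightarrow> dspace_map Y Y' f"
  unfolding mdspace_map_def dspace_map_def Omega_def
  by (auto dest: continuous_map_image_subset_topspace)

theorem theorem3p6:
  shows "(\<forall>Y :: 'a dspace. is_dspace Y \<longrightarrow> Sp (Omega Y) = Y) \<and>
         (\<forall>(Y :: 'a dspace) (Y' :: 'b dspace) f. is_dspace Y \<longrightarrow> is_dspace Y' \<longrightarrow>
             (mdspace_map (Omega Y) (Omega Y') f \<longleftrightarrow> dspace_map Y Y' f))"
  by (simp add: Sp_Omega mdspace_map_Omega_iff)

end
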